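(* Let ${\mathsf P}$ be a finite point process on a Polish space $X$, let ${\mathbf T}$ be a thinning kernel, let ${\mathsf P}'$ be the thinning of ${\mathsf P}$, and let ${\mathbf Q}$ be a condensation kernel of ${\mathsf P}$ with respect to ${\mathbf T}$. Then for every measurable $g:\mathcal M_f(X)^4\to[0,\infty)$, $$\int g(\kappa,\mu,\lambda,\nu)\,{\mathbf T}_\nu(\{\kappa\})\,{\mathbf Q}_\lambda(\mathrm d\nu)\,{\mathbf T}_\mu(\mathrm d\lambda)\,{\mathbf Q}_\kappa(\mathrm d\mu)\,{\mathsf P}'(\mathrm d\kappa)$$ $$=\int g(\kappa,\mu,\lambda,\nu)\,{\mathbf T}_\mu(\{\kappa\})\,{\mathbf Q}_\lambda(\mathrm d\mu)\,{\mathbf T}_\nu(\mathrm d\lambda)\,{\mathbf Q}_\kappa(\mathrm d\nu)\,{\mathsf P}'(\mathrm d\kappa).$$ In other words, for ${\mathsf P}'$-a.e. $\kappa$, $${\mathbf T}_\nu(\{\kappa\})\,{\mathbf Q}_\lambda(\mathrm d\nu)\,{\mathbf T}_\mu(\mathrm d\lambda)\,{\mathbf Q}_\kappa(\mathrm d\mu)={\mathbf T}_\mu(\{\kappa\})\,{\mathbf Q}_\lambda(\mathrm d\mu)\,{\mathbf T}_\nu(\mathrm d\lambda)\,{\mathbf Q}_\kappa(\mathrm d\nu).$$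
   Context: $\mathcal M_f(X)$ denotes the set of finite counting measures on $X$, with the $\sigma$-algebra generated by $\mu\mapsto\mu(B)$. A finite point process is a probability measure on $\mathcal M_f(X)$. A thinning kernel is a stochastic kernel $\mu\mapsto{\mathbf T}_\mu$ from $\mathcal M_f(X)$ to $\mathcal M_f(X)$ with ${\mathbf T}_\mu$ concentrated on $\{\eta:\eta\le\mu\}$. The thinning of ${\mathsf P}$ is ${\mathsf P}'=\int{\mathbf T}_\mu\,{\mathsf P}(\mathrm d\mu)$. A condensation kernel is a stochastic kernel $\eta\mapsto{\mathbf Q}_\eta$ concentrated on $\{\mu:\mu\ge\eta\}$ such that $$\iint g(\eta,\mu)\,{\mathbf T}_\mu(\mathrm d\eta)\,{\mathsf P}(\mathrm d\mu)=\iint g(\eta,\mu)\,{\mathbf Q}_\eta(\mathrm d\mu)\,{\mathsf P}'(\mathrm d\eta)$$ for all non-negative measurable $g$. *)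

theory Defs
  imports "HOL-Probability.Probability" "HOL-Library.Multiset"
begin

text \<open>Finite counting measures on X are represented as finite multisets over X
  (point masses with multiplicity).\<close>

definition count_in :: "'a multiset \<Rightarrow> 'a set \<Rightarrow> nat" where
  "count_in \<mu> B = size (filter_mset (\<lambda>x. x \<in> B) \<mu>)"

definition Mf :: "'a::polish_space multiset measure" where
  "Mf = sigma UNIV {{\<mu>. count_in \<mu> B = n} | B n. B \<in> sets (borel :: 'a measure)}"

definition finite_point_process :: "'a::polish_space multiset measure \<Rightarrow> bool" where
  "finite_point_process P \<longleftrightarrow> P \<in> space (prob_algebra Mf)"

definition thinning_kernel :: "('a::polish_space multiset \<Rightarrow> 'a multiset measure) \<Rightarrow> bool" where
  "thinning_kernel T \<longleftrightarrow> T \<in> Mf \<rightarrow>\<^sub>M prob_algebra Mf \<and> (\<forall>\<mu>. AE \<eta> in T \<mu>. \<eta> \<subseteq># \<mu>)"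

definition thinning :: "'a::polish_space multiset measure \<Rightarrow> ('a multiset \<Rightarrow> 'a multiset measure) \<Rightarrow> 'a multiset measure" where
  "thinning P T = P \<bind> T"

definition condensation_kernel ::
  "'a::polish_space multiset measure \<Rightarrow> ('a multiset \<Rightarrow> 'a multiset measure) \<Rightarrow> ('a multiset \<Rightarrow> 'a multiset measure) \<Rightarrow> bool" where
  "condensation_kernel P T Q \<longleftrightarrow>
     Q \<in> Mf \<rightarrow>\<^sub>M prob_algebra Mf \<and> (\<forall>\<eta>. AE \<mu> in Q \<eta>. \<eta> \<subseteq># \<mu>) \<and>
     (\<forall>g :: 'a multiset \<Rightarrow> 'a multiset \<Rightarrow> real.
        (\<forall>\<eta> \<mu>. 0 \<le> g \<eta> \<mu>) \<longrightarrow> case_prod g \<in> borel_measurable (Mf \<Otimes>\<^sub>M Mf) \<longrightarrow>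
        (\<integral>\<^sup>+\<mu>. \<integral>\<^sup>+\<eta>. ennreal (g \<eta> \<mu>) \<partial>T \<mu> \<partial>P) =
        (\<integral>\<^sup>+\<eta>. \<integral>\<^sup>+\<mu>. ennreal (g \<eta> \<mu>) \<partial>Q \<eta> \<partial>thinning P T))"

end

theory Submission
  imports Defs
begin

text \<open>Write \<open>P'\<close> for the thinning of \<open>P\<close>. Applying the condensation identity to the pair
  \<open>(\<kappa>, \<mu>)\<close> turns the outer integrals \<open>P'(d\<kappa>) Q\<^sub>\<kappa>(d\<mu>)\<close> into \<open>P(d\<mu>) T\<^sub>\<mu>(d\<kappa>)\<close>, so that
  \<open>\<kappa>\<close> and \<open>\<lambda>\<close> become two independent thinnings of the same \<open>\<mu>\<close>. By Fubini their roles can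
  be exchanged, and condensing back along \<open>(\<lambda>, \<mu>)\<close> writes both sides of the theorem as
  \<open>P'(d\<lambda>) Q\<^sub>\<lambda>(d\<mu>) Q\<^sub>\<lambda>(d\<nu>)\<close> followed by \<open>\<integral> g(\<kappa>,\<mu>,\<lambda>,\<nu>) T\<^sub>\<nu>{\<kappa>} T\<^sub>\<mu>(d\<kappa>)\<close> resp. the same
  expression with \<open>\<mu>\<close> and \<open>\<nu>\<close> interchanged. These agree because
  \<open>\<integral> h(\<kappa>) B{\<kappa>} A(d\<kappa>) = \<integral> h(\<kappa>) A{\<kappa>} B(d\<kappa>)\<close> for any two measures on a space with measurable
  diagonal (both equal the integral of \<open>h\<close> over the diagonal under \<open>A \<otimes> B\<close>), and because
  \<open>\<mu>\<close> and \<open>\<nu>\<close> are both integrated against \<open>Q\<^sub>\<lambda>\<close>.\<close>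

lemma nn_integral_swap:
  assumes "sigma_finite_measure A" "sigma_finite_measure B"
    and "sets A = sets M" "sets B = sets N"
    and "case_prod f \<in> borel_measurable (M \<Otimes>\<^sub>M N)"
  shows "(\<integral>\<^sup>+y. \<integral>\<^sup>+x. f x y \<partial>A \<partial>B) = (\<integral>\<^sup>+x. \<integral>\<^sup>+y. f x y \<partial>B \<partial>A)"
proof -
  interpret pair_sigma_finite A B
    using assms(1,2) by (simp add: pair_sigma_finite_def)
  have "case_prod f \<in> borel_measurable (A \<Otimes>\<^sub>M B)"
    using assms(5) measurable_cong_sets[OF sets_pair_measure_cong[OF assms(3,4)] refl]
    by blast
  then show ?thesis by (rule Fubini')
qed

lemma nn_integral_emeasure_singleton_swap:
  assumes diag: "{p. fst p = snd p} \<in> sets (M \<Otimes>\<^sub>M M)"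
    and "sigma_finite_measure A" "sigma_finite_measure B"
    and sets_A: "sets A = sets M" and sets_B: "sets B = sets M"
    and h[measurable]: "h \<in> borel_measurable M"
  shows "(\<integral>\<^sup>+k. h k * emeasure B {k} \<partial>A) = (\<integral>\<^sup>+k. h k * emeasure A {k} \<partial>B)"
proof -
  have [measurable]: "{k} \<in> sets M" for k
    using sets_Pair1[OF diag, of k] by (simp add: vimage_def)
  have emeasure_eq: "c * emeasure C {k} = (\<integral>\<^sup>+k'. c * indicator {k} k' \<partial>C)"
    if "sets C = sets M" for C k and c :: ennreal
    using that by (simp add: nn_integral_cmult_indicator)
  have "(\<integral>\<^sup>+k. h k * emeasure B {k} \<partial>A) = (\<integral>\<^sup>+k. \<integral>\<^sup>+k'. h k * indicator {k} k' \<partial>B \<partial>A)"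
    by (simp add: emeasure_eq[OF sets_B])
  also have "\<dots> = (\<integral>\<^sup>+k'. \<integral>\<^sup>+k. h k * indicator {k} k' \<partial>A \<partial>B)"
  proof (rule nn_integral_swap[symmetric])
    have "(\<lambda>(k, k'). h k * indicator {k} k') = (\<lambda>p. h (fst p) * indicator {p. fst p = snd p} p)"
      by (auto simp: indicator_def fun_eq_iff)
    then show "(\<lambda>(k, k'). h k * indicator {k} k') \<in> borel_measurable (M \<Otimes>\<^sub>M M)"
      using diag by simp
  qed (use assms in auto)
  also have "\<dots> = (\<integral>\<^sup>+k'. \<integral>\<^sup>+k. h k' * indicator {k'} k \<partial>A \<partial>B)"
    by (intro nn_integral_cong) (auto simp: indicator_def)
  also have "\<dots> = (\<integral>\<^sup>+k. h k * emeasure A {k} \<partial>B)"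
    by (simp add: emeasure_eq[OF sets_A])
  finally show ?thesis .
qed

lemma nn_integral_kernel_SUP:
  fixes f :: "nat \<Rightarrow> 'a \<Rightarrow> 'b \<Rightarrow> ennreal"
  assumes K[measurable]: "K \<in> M \<rightarrow>\<^sub>M subprob_algebra N" and sets_L: "sets L = sets M"
    and f[measurable]: "\<And>i. case_prod (f i) \<in> borel_measurable (M \<Otimes>\<^sub>M N)"
    and inc: "\<And>x y. incseq (\<lambda>i. f i x y)"
  shows "(\<integral>\<^sup>+x. \<integral>\<^sup>+y. (SUP i. f i x y) \<partial>K x \<partial>L) = (SUP i. \<integral>\<^sup>+x. \<integral>\<^sup>+y. f i x y \<partial>K x \<partial>L)"
proof -
  have inner: "(\<integral>\<^sup>+y. (SUP i. f i x y) \<partial>K x) = (SUP i. \<integral>\<^sup>+y. f i x y \<partial>K x)"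
    if "x \<in> space L" for x
  proof (rule nn_integral_monotone_convergence_SUP)
    show "incseq (\<lambda>i. f i x)" using inc by (auto simp: incseq_def le_fun_def)
    have x: "x \<in> space M" using that sets_eq_imp_space_eq[OF sets_L] by simp
    then have "sets (K x) = sets N" by (rule sets_kernel[OF K])
    moreover have "f i x \<in> borel_measurable N" for i
      using measurable_Pair2[OF f x] by simp
    ultimately show "f i x \<in> borel_measurable (K x)" for i
      using measurable_cong_sets[of "K x" N] by blast
  qed
  have "(\<integral>\<^sup>+x. \<integral>\<^sup>+y. (SUP i. f i x y) \<partial>K x \<partial>L) = (\<integral>\<^sup>+x. (SUP i. \<integral>\<^sup>+y. f i x y \<partial>K x) \<partial>L)"
    by (intro nn_integral_cong) (simp add: inner)
  also have "\<dots> = (SUP i. \<integral>\<^sup>+x. \<integral>\<^sup>+y. f i x y \<partial>K x \<partial>L)"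
  proof (rule nn_integral_monotone_convergence_SUP)
    show "incseq (\<lambda>i x. \<integral>\<^sup>+y. f i x y \<partial>K x)"
      using inc by (auto simp: incseq_def le_fun_def intro!: nn_integral_mono)
    show "(\<lambda>x. \<integral>\<^sup>+y. f i x y \<partial>K x) \<in> borel_measurable L" for i
      using nn_integral_measurable_subprob_algebra2[OF f K] measurable_cong_sets[OF sets_L refl]
      by blast
  qed
  finally show ?thesis .
qed

lemma ennreal_SUP_truncate:
  fixes G :: ennreal
  shows "G = (SUP n. ennreal (enn2real (min G (of_nat n))))"
    and "incseq (\<lambda>n. ennreal (enn2real (min G (of_nat n))))"
proof -
  have trunc: "ennreal (enn2real (min G (of_nat n))) = min G (of_nat n)" for n
    by (cases "G \<le> of_nat n")
      (auto simp: min_def ennreal_enn2real_if top_unique ennreal_of_nat_eq_real_of_nat[symmetric])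
  have "G = inf G (SUP n. of_nat n)" by (simp add: ennreal_SUP_of_nat_eq_top)
  also have "\<dots> = (SUP n. inf G (of_nat n))" by (simp add: inf_SUP)
  finally show "G = (SUP n. ennreal (enn2real (min G (of_nat n))))" by (simp add: trunc inf_min)
  show "incseq (\<lambda>n. ennreal (enn2real (min G (of_nat n))))"
    unfolding trunc incseq_def by (auto intro!: min.coboundedI2)
qed

lemma measurable_emeasure_kernel_singleton:
  assumes diag: "{p. fst p = snd p} \<in> sets (N \<Otimes>\<^sub>M N)"
    and K: "K \<in> M \<rightarrow>\<^sub>M subprob_algebra N" and b[measurable]: "b \<in> M \<rightarrow>\<^sub>M N"
  shows "(\<lambda>x. emeasure (K x) {b x}) \<in> borel_measurable M"
proof (rule emeasure_measurable_subprob_algebra2[OF _ K])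
  have "(\<lambda>p. (b (fst p), snd p)) \<in> M \<Otimes>\<^sub>M N \<rightarrow>\<^sub>M N \<Otimes>\<^sub>M N" by measurable
  moreover have "(SIGMA x:space M. {b x})
      = (\<lambda>p. (b (fst p), snd p)) -` {p. fst p = snd p} \<inter> space (M \<Otimes>\<^sub>M N)"
    using measurable_space[OF b] by (auto simp: space_pair_measure)
  ultimately show "(SIGMA x:space M. {b x}) \<in> sets (M \<Otimes>\<^sub>M N)"
    using measurable_sets[OF _ diag] by metis
qed

lemma measurable_case_prod4_compose:
  assumes "(\<lambda>(a, b, c, d). f a b c d) \<in> M1 \<Otimes>\<^sub>M M2 \<Otimes>\<^sub>M M3 \<Otimes>\<^sub>M M4 \<rightarrow>\<^sub>M N"
    and "a \<in> L \<rightarrow>\<^sub>M M1" "b \<in> L \<rightarrow>\<^sub>M M2" "c \<in> L \<rightarrow>\<^sub>M M3" "d \<in> L \<rightarrow>\<^sub>M M4"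
  shows "(\<lambda>x. f (a x) (b x) (c x) (d x)) \<in> L \<rightarrow>\<^sub>M N"
  using measurable_compose[OF _ assms(1), of "\<lambda>x. (a x, b x, c x, d x)"] assms(2-) by simp

lemma count_in_eq_count:
  assumes "\<And>y. y \<in># a \<Longrightarrow> y \<in> U \<longleftrightarrow> y = x"
  shows "count_in a U = count a x"
proof -
  have "filter_mset (\<lambda>y. y \<in> U) a = filter_mset (\<lambda>y. y = x) a"
    using assms by (intro filter_mset_cong) auto
  then show ?thesis unfolding count_in_def by (simp add: filter_eq_replicate_mset)
qed

lemma space_Mf[simp]: "space Mf = UNIV"
  by (simp add: Mf_def)

lemma count_in_sets_Mf:
  "B \<in> sets (borel :: 'a::polish_space measure) \<Longrightarrow> {\<mu>. count_in \<mu> B = n} \<in> sets (Mf :: 'a multiset measure)"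
  unfolding Mf_def by (subst sets_measure_of) auto

text \<open>Two distinct multisets differ in the count of some point \<open>x\<close>, and a basic open set
  separating \<open>x\<close> from the other (finitely many) atoms of both detects this difference.\<close>

lemma diagonal_sets_Mf: "{p. fst p = snd p} \<in> sets ((Mf :: 'a::polish_space multiset measure) \<Otimes>\<^sub>M Mf)"
proof -
  obtain \<B> :: "'a set set" where \<B>: "countable \<B>" "topological_basis \<B>"
    using ex_countable_basis by blast
  let ?D = "\<Inter>U\<in>\<B>. \<Union>n. {\<mu>::'a multiset. count_in \<mu> U = n} \<times> {\<mu>. count_in \<mu> U = n}"
  have "{p. fst p = snd p} = ?D"
  proof safe
    fix a b :: "'a multiset" assume D: "(a, b) \<in> ?D"
    show "fst (a, b) = snd (a, b)"
    proof (rule ccontr)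
      assume "fst (a, b) \<noteq> snd (a, b)"
      then obtain x where count_ne: "count a x \<noteq> count b x" by (auto simp: multiset_eq_iff)
      let ?S = "set_mset (a + b) - {x}"
      have "open (- ?S)" by (intro open_Compl finite_imp_closed) auto
      then obtain U where U: "U \<in> \<B>" "x \<in> U" "U \<subseteq> - ?S"
        using topological_basisE[OF \<B>(2), of "- ?S" x] by auto
      have "count_in a U = count a x" "count_in b U = count b x"
        by (rule count_in_eq_count; use U in auto)+
      moreover have "count_in a U = count_in b U" using D U(1) by auto
      ultimately show False using count_ne by simp
    qed
  qed auto
  moreover have "?D \<in> sets (Mf \<Otimes>\<^sub>M Mf)"
  proof (rule sets.countable_INT'')
    fix U assume "U \<in> \<B>"
    then have "U \<in> sets borel" using \<B>(2) topological_basis_open by (blast intro: borel_open)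
    then show "(\<Union>n. {\<mu>::'a multiset. count_in \<mu> U = n} \<times> {\<mu>. count_in \<mu> U = n}) \<in> sets (Mf \<Otimes>\<^sub>M Mf)"
      by (intro sets.countable_UN') (auto intro!: pair_measureI count_in_sets_Mf)
  qed (use \<B> sets.top[of "Mf \<Otimes>\<^sub>M Mf"] in \<open>auto simp: space_pair_measure\<close>)
  ultimately show ?thesis by simp
qed

text \<open>An instance the \<open>measurable\<close> method can use: in the library rule the target space
  \<open>N\<close> does not occur in the conclusion.\<close>

lemmas nn_integral_measurable_kernel_Mf[measurable (raw)] =
  nn_integral_measurable_subprob_algebra2[where N = Mf]

locale thinning_condensation =
  fixes P :: "'a::polish_space multiset measure" and T Q :: "'a multiset \<Rightarrow> 'a multiset measure"
  assumes point_process: "finite_point_process P"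
    and thinning_T: "thinning_kernel T"
    and condensation_Q: "condensation_kernel P T Q"
begin

lemma T_prob_kernel: "T \<in> Mf \<rightarrow>\<^sub>M prob_algebra Mf"
  using thinning_T by (simp add: thinning_kernel_def)

lemma Q_prob_kernel: "Q \<in> Mf \<rightarrow>\<^sub>M prob_algebra Mf"
  using condensation_Q by (simp add: condensation_kernel_def)

lemmas T_kernel[measurable] = measurable_prob_algebraD[OF T_prob_kernel]
lemmas Q_kernel[measurable] = measurable_prob_algebraD[OF Q_prob_kernel]

lemma P_prob_algebra: "P \<in> space (prob_algebra Mf)"
  using point_process by (simp add: finite_point_process_def)

lemma sets_T: "sets (T \<mu>) = sets Mf" and sets_Q: "sets (Q \<mu>) = sets Mf"
  and sets_P: "sets P = sets Mf" and sets_thinning: "sets (thinning P T) = sets Mf"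
  using sets_kernel[OF T_kernel] sets_kernel[OF Q_kernel] P_prob_algebra
    sets_bind'[OF P_prob_algebra T_prob_kernel]
  by (simp_all add: space_prob_algebra thinning_def)

lemma sigma_finite_T: "sigma_finite_measure (T \<mu>)" and sigma_finite_Q: "sigma_finite_measure (Q \<mu>)"
  using measurable_space[OF T_prob_kernel] measurable_space[OF Q_prob_kernel]
  by (auto simp: space_prob_algebra intro: prob_space_imp_sigma_finite)

lemma measurable_emeasure_T_singleton[measurable (raw)]:
  assumes "a \<in> M \<rightarrow>\<^sub>M Mf" "b \<in> M \<rightarrow>\<^sub>M Mf"
  shows "(\<lambda>x. emeasure (T (a x)) {b x}) \<in> borel_measurable M"
  by (rule measurable_emeasure_kernel_singleton[OF diagonal_sets_Mf _ assms(2)]) (use assms in measurable)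

text \<open>The defining identity of a condensation kernel is only assumed for real-valued
  integrands; truncating at level \<open>n\<close> and monotone convergence extend it to \<open>ennreal\<close>.\<close>

lemma condensation_nn_integral:
  fixes G :: "'a multiset \<Rightarrow> 'a multiset \<Rightarrow> ennreal"
  assumes G[measurable]: "case_prod G \<in> borel_measurable (Mf \<Otimes>\<^sub>M Mf)"
  shows "(\<integral>\<^sup>+\<mu>. \<integral>\<^sup>+\<eta>. G \<eta> \<mu> \<partial>T \<mu> \<partial>P) = (\<integral>\<^sup>+\<eta>. \<integral>\<^sup>+\<mu>. G \<eta> \<mu> \<partial>Q \<eta> \<partial>thinning P T)"
proof -
  define g where "g n \<eta> \<mu> = enn2real (min (G \<eta> \<mu>) (of_nat n))" for n \<eta> \<mu>
  have [measurable]: "case_prod (g n) \<in> borel_measurable (Mf \<Otimes>\<^sub>M Mf)" for n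
    unfolding g_def by measurable
  have condensation_g: "(\<integral>\<^sup>+\<mu>. \<integral>\<^sup>+\<eta>. ennreal (g n \<eta> \<mu>) \<partial>T \<mu> \<partial>P)
      = (\<integral>\<^sup>+\<eta>. \<integral>\<^sup>+\<mu>. ennreal (g n \<eta> \<mu>) \<partial>Q \<eta> \<partial>thinning P T)" for n
    using condensation_Q unfolding condensation_kernel_def by (auto simp: g_def)
  have G_SUP: "G \<eta> \<mu> = (SUP n. ennreal (g n \<eta> \<mu>))" for \<eta> \<mu>
    unfolding g_def by (rule ennreal_SUP_truncate(1))
  have inc: "incseq (\<lambda>n. ennreal (g n \<eta> \<mu>))" for \<eta> \<mu>
    unfolding g_def by (rule ennreal_SUP_truncate(2))
  have "(\<integral>\<^sup>+\<mu>. \<integral>\<^sup>+\<eta>. G \<eta> \<mu> \<partial>T \<mu> \<partial>P) = (SUP n. \<integral>\<^sup>+\<mu>. \<integral>\<^sup>+\<eta>. ennreal (g n \<eta> \<mu>) \<partial>T \<mu> \<partial>P)"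
    unfolding G_SUP by (rule nn_integral_kernel_SUP[OF T_kernel sets_P _ inc]) measurable
  also have "\<dots> = (SUP n. \<integral>\<^sup>+\<eta>. \<integral>\<^sup>+\<mu>. ennreal (g n \<eta> \<mu>) \<partial>Q \<eta> \<partial>thinning P T)"
    by (simp add: condensation_g)
  also have "\<dots> = (\<integral>\<^sup>+\<eta>. \<integral>\<^sup>+\<mu>. G \<eta> \<mu> \<partial>Q \<eta> \<partial>thinning P T)"
    unfolding G_SUP by (rule nn_integral_kernel_SUP[OF Q_kernel sets_thinning _ inc, symmetric]) measurable
  finally show ?thesis .
qed

lemma condensation_reorder:
  fixes H :: "'a multiset \<Rightarrow> 'a multiset \<Rightarrow> 'a multiset \<Rightarrow> 'a multiset \<Rightarrow> ennreal"
  assumes H: "(\<lambda>(\<kappa>, \<mu>, l, \<nu>). H \<kappa> \<mu> l \<nu>) \<in> borel_measurable (Mf \<Otimes>\<^sub>M Mf \<Otimes>\<^sub>M Mf \<Otimes>\<^sub>M Mf)"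
  shows "(\<integral>\<^sup>+\<kappa>. \<integral>\<^sup>+\<mu>. \<integral>\<^sup>+l. \<integral>\<^sup>+\<nu>. H \<kappa> \<mu> l \<nu> \<partial>Q l \<partial>T \<mu> \<partial>Q \<kappa> \<partial>thinning P T)
       = (\<integral>\<^sup>+l. \<integral>\<^sup>+\<mu>. \<integral>\<^sup>+\<nu>. \<integral>\<^sup>+\<kappa>. H \<kappa> \<mu> l \<nu> \<partial>T \<mu> \<partial>Q l \<partial>Q l \<partial>thinning P T)"
proof -
  note measurable_case_prod4_compose[OF H, measurable (raw)]
  have "(\<integral>\<^sup>+\<kappa>. \<integral>\<^sup>+\<mu>. \<integral>\<^sup>+l. \<integral>\<^sup>+\<nu>. H \<kappa> \<mu> l \<nu> \<partial>Q l \<partial>T \<mu> \<partial>Q \<kappa> \<partial>thinning P T)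
      = (\<integral>\<^sup>+\<mu>. \<integral>\<^sup>+\<kappa>. \<integral>\<^sup>+l. \<integral>\<^sup>+\<nu>. H \<kappa> \<mu> l \<nu> \<partial>Q l \<partial>T \<mu> \<partial>T \<mu> \<partial>P)"
    by (rule condensation_nn_integral[symmetric]) measurable
  also have "\<dots> = (\<integral>\<^sup>+\<mu>. \<integral>\<^sup>+l. \<integral>\<^sup>+\<kappa>. \<integral>\<^sup>+\<nu>. H \<kappa> \<mu> l \<nu> \<partial>Q l \<partial>T \<mu> \<partial>T \<mu> \<partial>P)"
    by (intro nn_integral_cong nn_integral_swap sigma_finite_T sigma_finite_Q sets_T) measurable
  also have "\<dots> = (\<integral>\<^sup>+\<mu>. \<integral>\<^sup>+l. \<integral>\<^sup>+\<nu>. \<integral>\<^sup>+\<kappa>. H \<kappa> \<mu> l \<nu> \<partial>T \<mu> \<partial>Q l \<partial>T \<mu> \<partial>P)"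
    by (intro nn_integral_cong nn_integral_swap sigma_finite_T sigma_finite_Q sets_T sets_Q) measurable
  also have "\<dots> = (\<integral>\<^sup>+l. \<integral>\<^sup>+\<mu>. \<integral>\<^sup>+\<nu>. \<integral>\<^sup>+\<kappa>. H \<kappa> \<mu> l \<nu> \<partial>T \<mu> \<partial>Q l \<partial>Q l \<partial>thinning P T)"
    by (rule condensation_nn_integral) measurable
  finally show ?thesis .
qed

end

theorem mainTheorem8:
  fixes P :: "'a::polish_space multiset measure"
    and T Q :: "'a multiset \<Rightarrow> 'a multiset measure"
    and g :: "'a multiset \<Rightarrow> 'a multiset \<Rightarrow> 'a multiset \<Rightarrow> 'a multiset \<Rightarrow> real"
  assumes "finite_point_process P"
    and "thinning_kernel T"
    and "condensation_kernel P T Q"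
    and "\<And>\<kappa> \<mu> l \<nu>. 0 \<le> g \<kappa> \<mu> l \<nu>"
    and "(\<lambda>(\<kappa>, \<mu>, l, \<nu>). g \<kappa> \<mu> l \<nu>) \<in> borel_measurable (Mf \<Otimes>\<^sub>M Mf \<Otimes>\<^sub>M Mf \<Otimes>\<^sub>M Mf)"
  shows "(\<integral>\<^sup>+\<kappa>. \<integral>\<^sup>+\<mu>. \<integral>\<^sup>+l. \<integral>\<^sup>+\<nu>. ennreal (g \<kappa> \<mu> l \<nu>) * emeasure (T \<nu>) {\<kappa>}
             \<partial>Q l \<partial>T \<mu> \<partial>Q \<kappa> \<partial>thinning P T)
       = (\<integral>\<^sup>+\<kappa>. \<integral>\<^sup>+\<nu>. \<integral>\<^sup>+l. \<integral>\<^sup>+\<mu>. ennreal (g \<kappa> \<mu> l \<nu>) * emeasure (T \<mu>) {\<kappa>}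
             \<partial>Q l \<partial>T \<nu> \<partial>Q \<kappa> \<partial>thinning P T)"
proof -
  interpret thinning_condensation P T Q
    using assms(1-3) by unfold_locales
  note measurable_case_prod4_compose[OF assms(5), measurable (raw)]
  have reordered_lhs: "(\<lambda>(\<kappa>, \<mu>, l, \<nu>). ennreal (g \<kappa> \<mu> l \<nu>) * emeasure (T \<nu>) {\<kappa>})
      \<in> borel_measurable (Mf \<Otimes>\<^sub>M Mf \<Otimes>\<^sub>M Mf \<Otimes>\<^sub>M Mf)"
    and reordered_rhs: "(\<lambda>(\<kappa>, \<nu>, l, \<mu>). ennreal (g \<kappa> \<mu> l \<nu>) * emeasure (T \<mu>) {\<kappa>})
      \<in> borel_measurable (Mf \<Otimes>\<^sub>M Mf \<Otimes>\<^sub>M Mf \<Otimes>\<^sub>M Mf)"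
    by measurable
  define F where "F \<mu> \<nu> l = (\<integral>\<^sup>+\<kappa>. ennreal (g \<kappa> \<mu> l \<nu>) * emeasure (T \<nu>) {\<kappa>} \<partial>T \<mu>)" for \<mu> \<nu> l
  have F_swap: "(\<integral>\<^sup>+\<kappa>. ennreal (g \<kappa> \<nu> l \<mu>) * emeasure (T \<nu>) {\<kappa>} \<partial>T \<mu>) = F \<nu> \<mu> l" for \<mu> \<nu> l
    unfolding F_def
    by (rule nn_integral_emeasure_singleton_swap[OF diagonal_sets_Mf
          sigma_finite_T sigma_finite_T sets_T sets_T]) measurable
  have [measurable]: "(\<lambda>(\<mu>, \<nu>). F \<mu> \<nu> l) \<in> borel_measurable (Mf \<Otimes>\<^sub>M Mf)"
    and [measurable]: "(\<lambda>(\<mu>, \<nu>). F \<nu> \<mu> l) \<in> borel_measurable (Mf \<Otimes>\<^sub>M Mf)" for l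
    unfolding F_def by measurable
  have "?thesis \<longleftrightarrow> (\<integral>\<^sup>+l. \<integral>\<^sup>+\<mu>. \<integral>\<^sup>+\<nu>. F \<mu> \<nu> l \<partial>Q l \<partial>Q l \<partial>thinning P T)
      = (\<integral>\<^sup>+l. \<integral>\<^sup>+\<mu>. \<integral>\<^sup>+\<nu>. \<integral>\<^sup>+\<kappa>. ennreal (g \<kappa> \<nu> l \<mu>) * emeasure (T \<nu>) {\<kappa>}
            \<partial>T \<mu> \<partial>Q l \<partial>Q l \<partial>thinning P T)"
    unfolding condensation_reorder[OF reordered_lhs]
      condensation_reorder[OF reordered_rhs] F_def ..
  also have "\<dots> \<longleftrightarrow> (\<integral>\<^sup>+l. \<integral>\<^sup>+\<mu>. \<integral>\<^sup>+\<nu>. F \<mu> \<nu> l \<partial>Q l \<partial>Q l \<partial>thinning P T)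
      = (\<integral>\<^sup>+l. \<integral>\<^sup>+\<mu>. \<integral>\<^sup>+\<nu>. F \<nu> \<mu> l \<partial>Q l \<partial>Q l \<partial>thinning P T)"
    by (simp only: F_swap)
  moreover have "(\<integral>\<^sup>+\<mu>. \<integral>\<^sup>+\<nu>. F \<mu> \<nu> l \<partial>Q l \<partial>Q l) = (\<integral>\<^sup>+\<mu>. \<integral>\<^sup>+\<nu>. F \<nu> \<mu> l \<partial>Q l \<partial>Q l)" for l
    by (rule nn_integral_swap[OF sigma_finite_Q sigma_finite_Q sets_Q sets_Q]) measurable
  ultimately show ?thesis by simp
qed

end
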